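(* For every nonzero integer $r$ and every integer $n\ge 0$, \[ \sum_{j=0}^{n}(-1)^{rj}L_{r(n-2j)}=\sum_{j=0}^{n}\left(\frac{L_r}{2}\right)^jL_{r(n-j)}=\frac{2F_{r(n+1)}}{F_r}. \]
   Context: $F_n$ and $L_n$ denote the Fibonacci and Lucas numbers, defined for all integers $n$ by $F_0=0,F_1=1$, $L_0=2,L_1=1$ and $x_n=x_{n-1}+x_{n-2}$; equivalently $F_n=(\alpha^n-\beta^n)/(\alpha-\beta)$, $L_n=\alpha^n+\beta^n$ with $\alpha=(1+\sqrt5)/2$, $\beta=(1-\sqrt5)/2$. In particular $F_{-n}=(-1)^{n-1}F_n$ and $L_{-n}=(-1)^nL_n$. *)

theory Defs
  imports Complex_Main
begin

definition phi_a :: real where "phi_a = (1 + sqrt 5) / 2"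
definition phi_b :: real where "phi_b = (1 - sqrt 5) / 2"

definition fibz :: "int \<Rightarrow> real" where
  "fibz n = (phi_a powi n - phi_b powi n) / (phi_a - phi_b)"
definition lucz :: "int \<Rightarrow> real" where
  "lucz n = phi_a powi n + phi_b powi n"

end

theory Submission
  imports Defs
begin

text \<open>Put \<open>a = \<alpha>^r\<close> and \<open>b = \<beta>^r\<close>. Then \<open>L(rm) = a^m + b^m\<close>, \<open>ab = (-1)^r\<close> and
  \<open>F(r(n+1)) / F(r) = (a^(n+1) - b^(n+1)) / (a - b)\<close>, so both sums become identities in two
  arbitrary nonzero \<open>a, b\<close>: the first is twice the geometric sum \<open>\<Sum> a^(n-j) b^j\<close>, and the
  second satisfies \<open>S(n+1) = a^(n+1) + b^(n+1) + (a + b)/2 \<cdot> S(n)\<close>, which telescopes after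
  multiplication by \<open>a - b\<close>.\<close>

lemma sum_power_mult_power_mult_diff:
  fixes a b :: "'a::comm_ring_1"
  shows "(\<Sum>j=0..n. a ^ (n - j) * b ^ j) * (a - b) = a ^ Suc n - b ^ Suc n"
proof -
  have "b ^ Suc n - a ^ Suc n = (b - a) * (\<Sum>j<Suc n. b ^ j * a ^ (n - j))"
    by (rule diff_power_eq_sum)
  also have "(\<Sum>j<Suc n. b ^ j * a ^ (n - j)) = (\<Sum>j=0..n. a ^ (n - j) * b ^ j)"
    by (simp add: atLeast0AtMost lessThan_Suc_atMost mult.commute)
  finally show ?thesis
    by (simp add: algebra_simps)
qed

lemma sum_power_mult_power_swap:
  fixes a b :: "'a::comm_semiring_1"
  shows "(\<Sum>j=0..n. b ^ (n - j) * a ^ j) = (\<Sum>j=0..n. a ^ (n - j) * b ^ j)"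
  by (subst sum.atLeastAtMost_rev[of _ 0 n, simplified]) (intro sum.cong, auto simp: mult.commute)

lemma power_mult_power_int_centered:
  fixes x :: "'a::field"
  assumes "x \<noteq> 0" "j \<le> n"
  shows "x ^ j * x powi (int n - 2 * int j) = x ^ (n - j)"
proof -
  have "x ^ (n - j) = x powi (int j + (int n - 2 * int j))"
    using assms(2) by (simp add: of_nat_diff flip: power_int_of_nat)
  also have "\<dots> = x powi int j * x powi (int n - 2 * int j)"
    using assms(1) by (rule power_int_add[OF disjI1])
  finally show ?thesis
    by simp
qed

lemma sum_centered_power_int_mult_diff:
  fixes a b :: "'a::field"
  assumes "a \<noteq> 0" "b \<noteq> 0"
  shows "(\<Sum>j=0..n. (a * b) ^ j * (a powi (int n - 2 * int j) + b powi (int n - 2 * int j)))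
           * (a - b) = 2 * (a ^ Suc n - b ^ Suc n)"
proof -
  have "(\<Sum>j=0..n. (a * b) ^ j * (a powi (int n - 2 * int j) + b powi (int n - 2 * int j)))
      = (\<Sum>j=0..n. a ^ (n - j) * b ^ j + b ^ (n - j) * a ^ j)"
    using power_mult_power_int_centered[OF assms(1)] power_mult_power_int_centered[OF assms(2)]
    by (intro sum.cong) (auto simp: power_mult_distrib algebra_simps)
  also have "\<dots> = 2 * (\<Sum>j=0..n. a ^ (n - j) * b ^ j)"
    by (simp add: sum.distrib sum_power_mult_power_swap)
  finally show ?thesis
    using sum_power_mult_power_mult_diff[of a n b] by (simp add: mult.assoc)
qed

lemma sum_half_sum_power_mult_diff:
  fixes a b :: "'a::field_char_0"
  shows "(\<Sum>j=0..n. ((a + b) / 2) ^ j * (a ^ (n - j) + b ^ (n - j))) * (a - b)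
           = 2 * (a ^ Suc n - b ^ Suc n)"
proof (induction n)
  case 0
  show ?case by simp
next
  case (Suc n)
  define S where "S = (\<Sum>j=0..n. ((a + b) / 2) ^ j * (a ^ (n - j) + b ^ (n - j)))"
  have "(\<Sum>j=0..Suc n. ((a + b) / 2) ^ j * (a ^ (Suc n - j) + b ^ (Suc n - j)))
      = a ^ Suc n + b ^ Suc n + (a + b) / 2 * S"
    unfolding S_def
    by (simp add: sum.atLeast0_atMost_Suc_shift sum_distrib_left mult.assoc del: sum.cl_ivl_Suc)
  also have "\<dots> * (a - b) = (a ^ Suc n + b ^ Suc n) * (a - b) + (a + b) * (S * (a - b)) / 2"
    by (simp add: field_simps)
  also have "\<dots> = (a ^ Suc n + b ^ Suc n) * (a - b) + (a + b) * (a ^ Suc n - b ^ Suc n)"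
    using Suc.IH unfolding S_def by simp
  also have "\<dots> = 2 * (a ^ Suc (Suc n) - b ^ Suc (Suc n))"
    by (simp add: algebra_simps)
  finally show ?case .
qed

lemma golden_ratio_conj:
  "phi_a * phi_b = -1" "phi_a - phi_b = sqrt 5" "phi_a > 1"
proof -
  have "sqrt 5 > (1::real)"
    by simp
  then show "phi_a * phi_b = -1" "phi_a - phi_b = sqrt 5" "phi_a > 1"
    unfolding phi_a_def phi_b_def by (simp_all add: field_simps)
qed

lemma golden_power_int_mult: "phi_a powi r * phi_b powi r = (-1) ^ nat \<bar>r\<bar>"
proof -
  have "phi_a powi r * phi_b powi r = (-1) powi r"
    by (simp flip: power_int_mult_distrib add: golden_ratio_conj(1))
  also have "\<dots> = (-1) ^ nat \<bar>r\<bar>"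
    by (simp add: power_int_def)
  finally show ?thesis .
qed

lemma lucz_mult: "lucz (r * m) = (phi_a powi r) powi m + (phi_b powi r) powi m"
  unfolding lucz_def by (simp add: power_int_mult)

lemma fibz_mult: "fibz (r * m) = ((phi_a powi r) powi m - (phi_b powi r) powi m) / sqrt 5"
  unfolding fibz_def golden_ratio_conj(2) by (simp add: power_int_mult)

lemma golden_power_int_neq:
  assumes "r \<noteq> 0"
  shows "phi_a powi r \<noteq> phi_b powi r"
proof
  assume eq: "phi_a powi r = phi_b powi r"
  have "\<bar>phi_a\<bar> * \<bar>phi_b\<bar> = 1"
    using golden_ratio_conj(1) by (simp flip: abs_mult)
  then have "\<bar>phi_b\<bar> = inverse \<bar>phi_a\<bar>"
    using golden_ratio_conj(3) by (simp add: field_simps)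
  then have "\<bar>phi_a\<bar> powi r = \<bar>phi_a\<bar> powi (- r)"
    using arg_cong[OF eq, of abs] by (simp add: power_int_abs power_int_inverse power_int_minus)
  moreover have "\<bar>phi_a\<bar> powi (min r (- r)) < \<bar>phi_a\<bar> powi (max r (- r))"
    using assms golden_ratio_conj(3) by (intro power_int_strict_increasing) auto
  ultimately show False
    by (simp add: min_def max_def split: if_splits)
qed

theorem theorem1:
  fixes r :: int and n :: nat
  assumes "r \<noteq> 0"
  shows "(\<Sum>j=0..n. (-1) ^ (nat \<bar>r\<bar> * j) * lucz (r * (int n - 2 * int j)))
           = (\<Sum>j=0..n. (lucz r / 2) ^ j * lucz (r * (int n - int j)))
       \<and> (\<Sum>j=0..n. (lucz r / 2) ^ j * lucz (r * (int n - int j)))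
           = 2 * fibz (r * (int n + 1)) / fibz r"
proof -
  define a where "a = phi_a powi r"
  define b where "b = phi_b powi r"
  have "a \<noteq> 0" "b \<noteq> 0" "a \<noteq> b" and ab: "a * b = (-1) ^ nat \<bar>r\<bar>"
    using golden_ratio_conj golden_power_int_neq[OF assms] golden_power_int_mult
    unfolding a_def b_def by auto
  have lucz: "lucz (r * m) = a powi m + b powi m" for m
    unfolding a_def b_def by (rule lucz_mult)
  have fib_quot: "2 * fibz (r * (int n + 1)) / fibz r = 2 * (a ^ Suc n - b ^ Suc n) / (a - b)"
    using fibz_mult[of r "int n + 1"] fibz_mult[of r 1] unfolding a_def b_def
    by (simp add: add.commute flip: power_int_of_nat)
  have "(\<Sum>j=0..n. (-1) ^ (nat \<bar>r\<bar> * j) * lucz (r * (int n - 2 * int j)))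
      = 2 * (a ^ Suc n - b ^ Suc n) / (a - b)"
    using sum_centered_power_int_mult_diff[OF \<open>a \<noteq> 0\<close> \<open>b \<noteq> 0\<close>, of n] \<open>a \<noteq> b\<close>
    by (simp add: ab lucz power_mult eq_divide_eq)
  moreover have "(\<Sum>j=0..n. (lucz r / 2) ^ j * lucz (r * (int n - int j)))
      = (\<Sum>j=0..n. ((a + b) / 2) ^ j * (a ^ (n - j) + b ^ (n - j)))"
    using lucz[of 1] by (intro sum.cong refl) (simp add: lucz flip: of_nat_diff power_int_of_nat)
  then have "(\<Sum>j=0..n. (lucz r / 2) ^ j * lucz (r * (int n - int j)))
      = 2 * (a ^ Suc n - b ^ Suc n) / (a - b)"
    using sum_half_sum_power_mult_diff[of a b n] \<open>a \<noteq> b\<close> by (simp add: eq_divide_eq)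
  ultimately show ?thesis
    using fib_quot by simp
qed

end
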